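(* Let $n\geq 3$, $p,q>0$ with $pq>1$, $\alpha\in(0,n)$ and $\sigma_1,\sigma_2\in[0,\alpha)$, and let $u,v$ be bounded and decaying positive solutions of $$u(x)=\int_{\mathbb{R}^n}\frac{v(y)^q}{|x-y|^{n-\alpha}|y|^{\sigma_1}}\,dy,\qquad v(x)=\int_{\mathbb{R}^n}\frac{u(y)^p}{|x-y|^{n-\alpha}|y|^{\sigma_2}}\,dy,\qquad x\in\mathbb{R}^n.$$ (i) There exists $C>0$ such that, as $|x|\to\infty$, $u(x)\leq C|x|^{-q_0}$ and $v(x)\leq C|x|^{-p_0}$. (ii) If moreover $\frac{n-\sigma_1}{1+q}+\frac{n-\sigma_2}{1+p}>n-\alpha$, then $$\int_{\mathbb{R}^n}\frac{u(x)^{p+1}}{|x|^{\sigma_2}}\,dx<\infty\quad\text{and}\quad\int_{\mathbb{R}^n}\frac{v(x)^{q+1}}{|x|^{\sigma_1}}\,dx<\infty.$$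
   Context: Define $$p_0=\frac{\alpha(1+p)-(\sigma_2+\sigma_1p)}{pq-1},\qquad q_0=\frac{\alpha(1+q)-(\sigma_1+\sigma_2q)}{pq-1}.$$ The notation $f(x)\simeq g(x)$ means there exist constants $c,C>0$ with $cg(x)\leq f(x)\leq Cg(x)$ as $|x|\to\infty$. A positive solution is decaying if $u(x)\simeq|x|^{-\theta_1}$ and $v(x)\simeq|x|^{-\theta_2}$ for some $\theta_1,\theta_2>0$. *)

theory Defs
  imports "HOL-Analysis.Analysis"
begin

definition p0 :: "real \<Rightarrow> real \<Rightarrow> real \<Rightarrow> real \<Rightarrow> real \<Rightarrow> real" where
  "p0 \<alpha> p q \<sigma>1 \<sigma>2 = (\<alpha> * (1 + p) - (\<sigma>2 + \<sigma>1 * p)) / (p * q - 1)"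

definition q0 :: "real \<Rightarrow> real \<Rightarrow> real \<Rightarrow> real \<Rightarrow> real \<Rightarrow> real" where
  "q0 \<alpha> p q \<sigma>1 \<sigma>2 = (\<alpha> * (1 + q) - (\<sigma>1 + \<sigma>2 * q)) / (p * q - 1)"

definition decays_like :: "('a::real_normed_vector \<Rightarrow> real) \<Rightarrow> real \<Rightarrow> bool" where
  "decays_like f \<theta> \<longleftrightarrow> (\<exists>c C R. c > 0 \<and> C > 0 \<and>
     (\<forall>x. norm x \<ge> R \<longrightarrow> c * norm x powr (-\<theta>) \<le> f x \<and> f x \<le> C * norm x powr (-\<theta>)))"

end

theory Submission
  imports Defs
begin

text \<open>
  Testing the integral equation for \<open>u\<close> at a point \<open>x\<close> with \<open>|x| = 2r\<close> only on the ball
  \<open>B(x, r)\<close>, where \<open>v \<ge> c r^(-\<theta>2)\<close>, gives \<open>u(x) \<ge> K r^(\<alpha> - \<sigma>1 - q \<theta>2)\<close>; comparing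
  with \<open>u(x) \<le> C r^(-\<theta>1)\<close> for large \<open>r\<close> yields \<open>\<theta>1 \<le> q \<theta>2 + \<sigma>1 - \<alpha>\<close>, and symmetrically
  \<open>\<theta>2 \<le> p \<theta>1 + \<sigma>2 - \<alpha>\<close>. Since \<open>pq > 1\<close>, these two inequalities force \<open>\<theta>1 \<ge> q0\<close> and
  \<open>\<theta>2 \<ge> p0\<close>, which is (i). For (ii), split the weighted integral at a large radius: near the
  origin \<open>u\<close> is bounded and \<open>|x|^(-\<sigma>2)\<close> is integrable because \<open>\<sigma>2 < n\<close>; outside, the
  integrand is \<open>O(|x|^(-(p+1)\<theta>1 - \<sigma>2))\<close>, and the hypothesis of (ii) says exactly that
  \<open>(p+1) q0 + \<sigma>2 > n\<close>. Both radial integrals are bounded by summing over dyadic shells.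
\<close>

lemma exists_power2_bracket:
  fixes t :: real assumes "1 \<le> t"
  shows "\<exists>k::nat. 2^k \<le> t \<and> t < 2^(k+1)"
proof -
  define k where "k = nat \<lfloor>log 2 t\<rfloor>"
  have "\<lfloor>log 2 t\<rfloor> = int k" using assms by (simp add: k_def)
  hence "2 powr real k \<le> t \<and> t < 2 powr (real k + 1)"
    using floor_log_eq_powr_iff[of t 2 "int k"] assms by simp
  hence "2^k \<le> t \<and> t < 2^(k+1)" by (simp add: powr_add powr_realpow[symmetric])
  thus ?thesis ..
qed

lemma powr_times_power_geometric:
  fixes c \<rho> d \<gamma> :: real and D k :: nat
  assumes "c > 0" "\<rho> > 0" "d \<ge> 0"
  shows "(c * \<rho>^k) powr (-\<gamma>) * (d * \<rho>^k)^D = (c powr (-\<gamma>) * d^D) * (\<rho> powr (real D - \<gamma>))^k"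
proof -
  have a: "(c * \<rho>^k) powr (-\<gamma>) = c powr (-\<gamma>) * \<rho> powr (- \<gamma> * k)"
    using assms by (simp add: powr_mult powr_realpow[symmetric] powr_powr mult.commute)
  have b: "(d * \<rho>^k)^D = d^D * \<rho> powr (real k * D)"
    using assms by (simp add: power_mult_distrib powr_realpow[symmetric] power_mult[symmetric] powr_powr mult.commute)
  have c: "(\<rho> powr (real D - \<gamma>))^k = \<rho> powr ((real D - \<gamma>) * k)"
    using assms by (simp add: powr_realpow[symmetric] powr_powr)
  show ?thesis unfolding a b c
    by (simp add: algebra_simps powr_add[symmetric])
qed

lemma nn_integral_finite_if_dominated_on_balls:
  fixes f :: "'a::euclidean_space \<Rightarrow> ennreal" and a b :: "nat \<Rightarrow> real"
  assumes dom: "\<And>x. f x \<noteq> 0 \<Longrightarrow> \<exists>k. f x \<le> ennreal (a k) \<and> norm x < b k"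
    and a: "\<And>k. a k \<ge> 0" and b: "\<And>k. b k \<ge> 0"
    and summable: "summable (\<lambda>k. a k * b k ^ DIM('a))"
  shows "(\<integral>\<^sup>+x. f x \<partial>lborel) < \<infinity>"
proof -
  define V where "V = unit_ball_vol (DIM('a))"
  have V: "V \<ge> 0" unfolding V_def by simp
  have "(\<integral>\<^sup>+x. f x \<partial>lborel) \<le> (\<integral>\<^sup>+x. (\<Sum>k. ennreal (a k) * indicator (ball 0 (b k)) (x::'a)) \<partial>lborel)"
  proof (intro nn_integral_mono)
    fix x
    show "f x \<le> (\<Sum>k. ennreal (a k) * indicator (ball 0 (b k)) x)"
    proof (cases "f x = 0")
      case False
      then obtain k where k: "f x \<le> ennreal (a k)" "norm x < b k" using dom by blast
      hence "f x \<le> ennreal (a k) * indicator (ball 0 (b k)) x" by (simp add: indicator_def)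
      also have "\<dots> \<le> (\<Sum>k. ennreal (a k) * indicator (ball 0 (b k)) x)"
        using sum_le_suminf[of "\<lambda>k. ennreal (a k) * indicator (ball 0 (b k)) x" "{k}"]
        by (simp only: summableI finite.intros sum.insert sum.empty empty_iff add_0_right zero_le simp_thms)
      finally show ?thesis .
    qed simp
  qed
  also have "\<dots> = (\<Sum>k. \<integral>\<^sup>+x. ennreal (a k) * indicator (ball 0 (b k)) (x::'a) \<partial>lborel)"
    by (rule nn_integral_suminf) (auto intro!: borel_measurable_times_ennreal borel_measurable_indicator)
  also have "\<dots> = (\<Sum>k. ennreal (a k * (V * b k ^ DIM('a))))"
    using b a V by (simp add: nn_integral_cmult_indicator emeasure_ball V_def ennreal_mult)
  also have "\<dots> = ennreal (\<Sum>k. a k * (V * b k ^ DIM('a)))"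
    using a b V summable_mult[OF summable, of V] by (intro suminf_ennreal2) (auto simp: mult_ac)
  finally show ?thesis by (simp add: order_le_less_trans)
qed

lemma nn_integral_norm_powr_outside_ball_finite:
  fixes R \<beta> :: real assumes R: "R > 0" and \<beta>: "\<beta> > DIM('a)"
  shows "(\<integral>\<^sup>+x. ennreal (norm x powr (-\<beta>)) * indicator {x. R \<le> norm x} (x::'a::euclidean_space) \<partial>lborel) < \<infinity>"
proof (rule nn_integral_finite_if_dominated_on_balls[where a="\<lambda>k. (R * 2^k) powr (-\<beta>)" and b="\<lambda>k. (2*R) * 2^k"])
  fix x :: 'a
  assume "ennreal (norm x powr (-\<beta>)) * indicator {x. R \<le> norm x} x \<noteq> 0"
  hence x: "R \<le> norm x" by (auto simp: indicator_def split: if_splits)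
  obtain k where k: "2^k \<le> norm x / R" "norm x / R < 2^(k+1)"
    using exists_power2_bracket[of "norm x / R"] x R by auto
  have "R * 2^k \<le> norm x" "norm x < 2*R*2^k" using k R by (simp_all add: field_simps)
  moreover have "\<beta> > 0" using \<beta> of_nat_0_le_iff[of "DIM('a)"] by linarith
  ultimately have "norm x powr (-\<beta>) \<le> (R*2^k) powr (-\<beta>)" "norm x < 2*R*2^k"
    using R by (auto intro!: powr_mono2')
  thus "\<exists>k. ennreal (norm x powr (-\<beta>)) * indicator {x. R \<le> norm x} x \<le> ennreal ((R * 2^k) powr (-\<beta>)) \<and> norm x < (2*R) * 2^k"
    using x by (intro exI[of _ k]) (auto simp: indicator_def)
next
  have eq: "(\<lambda>k. (R * 2^k) powr (-\<beta>) * ((2*R) * 2^k) ^ DIM('a)) =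
     (\<lambda>k. (R powr (-\<beta>) * (2*R)^DIM('a)) * ((2::real) powr (real DIM('a) - \<beta>))^k)"
    using R by (intro ext powr_times_power_geometric) auto
  have "norm ((2::real) powr (real DIM('a) - \<beta>)) < 1"
    using \<beta> by (simp add: powr_less_one)
  thus "summable (\<lambda>k. (R * 2^k) powr (-\<beta>) * ((2*R) * 2^k) ^ DIM('a))"
    unfolding eq by (intro summable_mult summable_geometric)
qed (use R in auto)

lemma nn_integral_norm_powr_inside_ball_finite:
  fixes R s :: real assumes R: "R > 0" and s: "0 \<le> s" "s < DIM('a)"
  shows "(\<integral>\<^sup>+x. ennreal (norm x powr (-s)) * indicator {x. norm x < R} (x::'a::euclidean_space) \<partial>lborel) < \<infinity>"
proof (rule nn_integral_finite_if_dominated_on_balls[where a="\<lambda>k. (R/2 * (1/2)^k) powr (-s)" and b="\<lambda>k. (2*R) * (1/2)^k"])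
  fix x :: 'a
  assume nz: "ennreal (norm x powr (-s)) * indicator {x. norm x < R} x \<noteq> 0"
  hence x: "0 < norm x" "norm x < R" by (auto simp: indicator_def split: if_splits)
  obtain k where k: "2^k \<le> R / norm x" "R / norm x < 2^(k+1)"
    using exists_power2_bracket[of "R / norm x"] x by auto
  have "R/2 * (1/2)^k \<le> norm x" "norm x < 2*R*(1/2)^k"
    using k R x by (simp_all add: field_simps power_one_over)
  hence "norm x powr (-s) \<le> (R/2 * (1/2)^k) powr (-s)" "norm x < 2*R*(1/2)^k"
    using s R by (auto intro!: powr_mono2')
  thus "\<exists>k. ennreal (norm x powr (-s)) * indicator {x. norm x < R} x \<le> ennreal ((R/2 * (1/2)^k) powr (-s)) \<and> norm x < (2*R) * (1/2)^k"
    using x by (intro exI[of _ k]) (auto simp: indicator_def)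
next
  have eq: "(\<lambda>k. (R/2 * (1/2)^k) powr (-s) * ((2*R) * (1/2)^k) ^ DIM('a)) =
     (\<lambda>k. ((R/2) powr (-s) * (2*R)^DIM('a)) * ((1/2::real) powr (real DIM('a) - s))^k)"
    using R by (intro ext powr_times_power_geometric) auto
  have "norm ((1/2::real) powr (real DIM('a) - s)) < 1"
    using s by (simp add: powr01_less_one)
  thus "summable (\<lambda>k. (R/2 * (1/2)^k) powr (-s) * ((2*R) * (1/2)^k) ^ DIM('a))"
    unfolding eq by (intro summable_mult summable_geometric)
qed (use R in auto)

lemma nn_integral_decaying_power_weight_finite:
  fixes w :: "'a::euclidean_space \<Rightarrow> real" and M \<theta> p \<sigma> :: real
  assumes pos: "\<And>x. w x > 0" and bdd: "\<And>x. w x \<le> M" and dec: "decays_like w \<theta>"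
    and p: "p > 0" and \<sigma>: "0 \<le> \<sigma>" "\<sigma> < DIM('a)" and big: "DIM('a) < (p+1)*\<theta> + \<sigma>"
  shows "(\<integral>\<^sup>+x. ennreal (w x powr (p+1) / norm x powr \<sigma>) \<partial>lborel) < \<infinity>"
proof -
  obtain C R0 where C: "C > 0" and upper: "\<And>x. R0 \<le> norm x \<Longrightarrow> w x \<le> C * norm x powr (-\<theta>)"
    using dec unfolding decays_like_def by blast
  define R where "R = max R0 1"
  define g1 where "g1 = (\<lambda>x::'a. ennreal (norm x powr (-\<sigma>)) * indicator {x. norm x < R} x)"
  define g2 where "g2 = (\<lambda>x::'a. ennreal (norm x powr (-((p+1)*\<theta>+\<sigma>))) * indicator {x. R \<le> norm x} x)"
  have "(\<integral>\<^sup>+x. ennreal (w x powr (p+1) / norm x powr \<sigma>) \<partial>lborel)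
      \<le> (\<integral>\<^sup>+x. ennreal (M powr (p+1)) * g1 x + ennreal (C powr (p+1)) * g2 x \<partial>lborel)"
  proof (intro nn_integral_mono)
    fix x :: 'a
    have e: "w x powr (p+1) / norm x powr \<sigma> = w x powr (p+1) * norm x powr (-\<sigma>)"
      by (simp add: powr_minus_divide)
    show "ennreal (w x powr (p+1) / norm x powr \<sigma>) \<le> ennreal (M powr (p+1)) * g1 x + ennreal (C powr (p+1)) * g2 x"
    proof (cases "norm x < R")
      case True
      have "w x powr (p+1) * norm x powr (-\<sigma>) \<le> M powr (p+1) * norm x powr (-\<sigma>)"
        by (intro mult_right_mono powr_mono2) (use pos[of x] bdd[of x] p in auto)
      thus ?thesis
        using True unfolding e g1_def by (simp add: ennreal_mult[symmetric] ennreal_leI add_increasing2)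
    next
      case False
      hence Rx: "R \<le> norm x" by simp
      have "w x powr (p+1) \<le> (C * norm x powr (-\<theta>)) powr (p+1)"
        using pos[of x] upper[of x] Rx p unfolding R_def by (intro powr_mono2) auto
      also have "\<dots> = C powr (p+1) * norm x powr (-\<theta>*(p+1))"
        using C by (simp add: powr_mult powr_powr)
      finally have "w x powr (p+1) * norm x powr (-\<sigma>) \<le> C powr (p+1) * norm x powr (-\<theta>*(p+1)) * norm x powr (-\<sigma>)"
        by (rule mult_right_mono) simp
      also have "\<dots> = C powr (p+1) * norm x powr (-((p+1)*\<theta>+\<sigma>))"
        by (simp add: mult.assoc powr_add[symmetric] algebra_simps)
      finally have "w x powr (p+1) * norm x powr (-\<sigma>) \<le> C powr (p+1) * norm x powr (-((p+1)*\<theta>+\<sigma>))" .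
      thus ?thesis
        using Rx unfolding e g2_def by (simp add: ennreal_mult[symmetric] ennreal_leI add_increasing)
    qed
  qed
  also have "\<dots> = ennreal (M powr (p+1)) * (\<integral>\<^sup>+x. g1 x \<partial>lborel) + ennreal (C powr (p+1)) * (\<integral>\<^sup>+x. g2 x \<partial>lborel)"
    unfolding g1_def g2_def by (subst nn_integral_add) (auto simp: nn_integral_cmult)
  also have "\<dots> < \<infinity>"
  proof -
    have "R > 0" unfolding R_def by simp
    have "(\<integral>\<^sup>+x. g1 x \<partial>lborel) < \<infinity>"
      unfolding g1_def by (rule nn_integral_norm_powr_inside_ball_finite) (use \<open>R > 0\<close> \<sigma> in auto)
    moreover have "(\<integral>\<^sup>+x. g2 x \<partial>lborel) < \<infinity>"
      unfolding g2_def by (rule nn_integral_norm_powr_outside_ball_finite) (use \<open>R > 0\<close> big in auto)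
    ultimately show ?thesis by (simp add: ennreal_mult_less_top)
  qed
  finally show ?thesis .
qed

lemma riesz_integrand_lower_bound_on_ball:
  fixes z :: "'a::euclidean_space \<Rightarrow> real" and x y :: 'a and Rz cz \<theta> q \<sigma> \<alpha> r :: real
  assumes lower: "\<And>y. Rz \<le> norm y \<Longrightarrow> cz * norm y powr (-\<theta>) \<le> z y"
    and cz: "cz > 0" and \<theta>: "\<theta> \<ge> 0" and q: "q > 0" and \<sigma>: "0 \<le> \<sigma>" and \<alpha>: "\<alpha> < DIM('a)"
    and r: "0 < r" "Rz \<le> r" and x: "norm x = 2*r" and y: "y \<in> ball x r" "y \<noteq> x"
  shows "(cz * (3*r) powr (-\<theta>)) powr q / (r powr (DIM('a) - \<alpha>) * (3*r) powr \<sigma>)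
           \<le> z y powr q / (norm (x - y) powr (DIM('a) - \<alpha>) * norm y powr \<sigma>)"
proof (rule frac_le)
  have dxy: "0 < norm (x - y)" "norm (x - y) < r" using y by (auto simp: dist_norm)
  have ny: "r \<le> norm y" "norm y \<le> 3*r"
    using norm_triangle_ineq2[of x y] norm_triangle_sub[of y x] norm_minus_commute[of x y] x dxy
    by linarith+
  have "cz * (3*r) powr (-\<theta>) \<le> cz * norm y powr (-\<theta>)"
    using \<theta> r ny cz by (intro mult_left_mono powr_mono2') auto
  also have "\<dots> \<le> z y" using lower ny r by simp
  finally show "(cz * (3*r) powr (-\<theta>)) powr q \<le> z y powr q"
    using q cz by (intro powr_mono2) auto
  show "norm (x - y) powr (DIM('a) - \<alpha>) * norm y powr \<sigma> \<le> r powr (DIM('a) - \<alpha>) * (3*r) powr \<sigma>"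
    using dxy \<alpha> \<sigma> ny by (intro mult_mono powr_mono2) auto
  show "0 < norm (x - y) powr (DIM('a) - \<alpha>) * norm y powr \<sigma>"
    using dxy ny r by (intro mult_pos_pos) auto
qed simp

lemma riesz_potential_lower_bound:
  fixes w z :: "'a::euclidean_space \<Rightarrow> real" and x :: 'a and Rz cz \<theta> q \<sigma> \<alpha> r :: real
  assumes lower: "\<And>y. Rz \<le> norm y \<Longrightarrow> cz * norm y powr (-\<theta>) \<le> z y"
    and cz: "cz > 0" and \<theta>: "\<theta> \<ge> 0" and q: "q > 0" and \<sigma>: "0 \<le> \<sigma>" and \<alpha>: "\<alpha> < DIM('a)"
    and eq: "ennreal (w x) = (\<integral>\<^sup>+ y. ennreal (z y powr q / (norm (x - y) powr (DIM('a) - \<alpha>) * norm y powr \<sigma>)) \<partial>lborel)"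
    and r: "0 < r" "Rz \<le> r" and x: "norm x = 2*r"
  shows "unit_ball_vol DIM('a) * cz powr q * 3 powr (-\<theta>*q - \<sigma>) * r powr (\<alpha> - \<sigma> - q*\<theta>) \<le> w x"
proof -
  define D where "D = real DIM('a)"
  define k where "k = (cz * (3*r) powr (-\<theta>)) powr q / (r powr (D - \<alpha>) * (3*r) powr \<sigma>)"
  have "AE y in lborel. ennreal k * indicator (ball x r) y
          \<le> ennreal (z y powr q / (norm (x - y) powr (D - \<alpha>) * norm y powr \<sigma>))"
    using AE_lborel_singleton[of x]
  proof eventually_elim
    case (elim y)
    thus ?case
      using riesz_integrand_lower_bound_on_ball[OF lower cz \<theta> q \<sigma> \<alpha> r x, of y]
      by (cases "y \<in> ball x r") (auto simp: D_def k_def intro: ennreal_leI)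
  qed
  hence "ennreal k * emeasure lborel (ball x r) \<le> ennreal (w x)"
    unfolding eq D_def by (subst nn_integral_cmult_indicator[symmetric]) (auto intro: nn_integral_mono_AE)
  moreover have k: "0 < k" using cz r by (simp add: k_def)
  ultimately have "ennreal (k * (unit_ball_vol D * r ^ DIM('a))) \<le> ennreal (w x)"
    using r by (simp add: emeasure_ball D_def ennreal_mult)
  moreover have "0 < k * (unit_ball_vol D * r ^ DIM('a))" using k r by (simp add: D_def)
  ultimately have "k * (unit_ball_vol D * r ^ DIM('a)) \<le> w x"
    by (metis ennreal_le_iff2 not_le)
  also have "k * (unit_ball_vol D * r ^ DIM('a))
      = unit_ball_vol D * cz powr q * 3 powr (-\<theta>*q - \<sigma>) * r powr (\<alpha> - \<sigma> - q*\<theta>)"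
    using cz r
    by (simp add: k_def D_def powr_realpow[symmetric] powr_mult powr_powr powr_diff field_simps
        flip: powr_add)
  finally show ?thesis unfolding D_def .
qed

lemma exponent_le_of_powr_bound:
  fixes K C e \<theta> r0 :: real
  assumes K: "K > 0" and bound: "\<And>r. r0 \<le> r \<Longrightarrow> K * r powr e \<le> C * r powr (-\<theta>)"
  shows "\<theta> \<le> - e"
proof (rule ccontr)
  assume "\<not> \<theta> \<le> - e"
  hence "((\<lambda>r. C * r powr (-\<theta> - e)) \<longlongrightarrow> C * 0) at_top"
    by (intro tendsto_mult tendsto_const tendsto_neg_powr filterlim_ident) auto
  moreover have "eventually (\<lambda>r. K \<le> C * r powr (-\<theta> - e)) at_top"
    using eventually_ge_at_top[of "max r0 1"]
  proof eventually_elim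
    case (elim r)
    hence "K * r powr e * r powr (-e) \<le> C * r powr (-\<theta>) * r powr (-e)"
      using bound by (intro mult_right_mono) auto
    thus ?case using elim by (simp add: mult.assoc powr_add[symmetric])
  qed
  ultimately have "K \<le> 0" by (intro tendsto_lowerbound) auto
  with K show False by simp
qed

lemma decays_like_exponent_le_riesz_potential:
  fixes w z :: "'a::euclidean_space \<Rightarrow> real" and \<theta>w \<theta>z q \<sigma> \<alpha> :: real
  assumes w: "decays_like w \<theta>w" and z: "decays_like z \<theta>z" and \<theta>z: "\<theta>z \<ge> 0"
    and q: "q > 0" and \<sigma>: "0 \<le> \<sigma>" and \<alpha>: "\<alpha> < DIM('a)"
    and eq: "\<And>x. ennreal (w x) = (\<integral>\<^sup>+ y. ennreal (z y powr q / (norm (x - y) powr (DIM('a) - \<alpha>) * norm y powr \<sigma>)) \<partial>lborel)"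
  shows "\<theta>w \<le> q * \<theta>z + \<sigma> - \<alpha>"
proof -
  obtain cz Rz where cz: "cz > 0" and lower: "\<And>y. Rz \<le> norm y \<Longrightarrow> cz * norm y powr (-\<theta>z) \<le> z y"
    using z unfolding decays_like_def by blast
  obtain Cw Rw where upper: "\<And>x. Rw \<le> norm x \<Longrightarrow> w x \<le> Cw * norm x powr (-\<theta>w)"
    using w unfolding decays_like_def by blast
  define K where "K = unit_ball_vol DIM('a) * cz powr q * 3 powr (-\<theta>z*q - \<sigma>)"
  have "K > 0" using cz by (simp add: K_def)
  moreover have "K * r powr (\<alpha> - \<sigma> - q*\<theta>z) \<le> (Cw * 2 powr (-\<theta>w)) * r powr (-\<theta>w)"
    if r: "max 1 (max Rz Rw) \<le> r" for r
  proof -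
    obtain x :: 'a where x: "norm x = 2*r" using vector_choose_size[of "2*r"] r by auto
    have "K * r powr (\<alpha> - \<sigma> - q*\<theta>z) \<le> w x"
      unfolding K_def using r x
      by (intro riesz_potential_lower_bound[OF lower cz \<theta>z q \<sigma> \<alpha> eq]) auto
    also have "\<dots> \<le> Cw * (2*r) powr (-\<theta>w)" using upper[of x] x r by simp
    finally show ?thesis using r by (simp add: powr_mult mult.assoc)
  qed
  ultimately have "\<theta>w \<le> - (\<alpha> - \<sigma> - q*\<theta>z)" by (rule exponent_le_of_powr_bound)
  thus ?thesis by simp
qed

lemma q0_le_of_decay_exponent_inequalities:
  fixes \<alpha> p q \<sigma> \<tau> \<theta> \<eta> :: real
  assumes "p > 0" "q > 0" "p * q > 1"
    and h1: "\<theta> \<le> q * \<eta> + \<sigma> - \<alpha>" and h2: "\<eta> \<le> p * \<theta> + \<tau> - \<alpha>"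
  shows "q0 \<alpha> p q \<sigma> \<tau> \<le> \<theta>"
proof -
  have "q * \<eta> \<le> q * (p * \<theta> + \<tau> - \<alpha>)" using h2 assms by (intro mult_left_mono) auto
  hence "\<alpha> * (1 + q) - (\<sigma> + \<tau> * q) \<le> \<theta> * (p * q - 1)"
    using h1 by (simp add: algebra_simps)
  thus ?thesis unfolding q0_def using assms by (simp add: pos_divide_le_eq)
qed

lemma p0_eq_q0_swap: "p0 \<alpha> p q \<sigma> \<tau> = q0 \<alpha> q p \<tau> \<sigma>"
  unfolding p0_def q0_def by (simp add: mult.commute)

lemma dim_less_integrability_exponent:
  fixes n \<alpha> p q \<sigma> \<tau> \<theta> :: real
  assumes "p > 0" "q > 0" "p * q > 1"
    and H: "(n - \<sigma>) / (1 + q) + (n - \<tau>) / (1 + p) > n - \<alpha>" and \<theta>: "q0 \<alpha> p q \<sigma> \<tau> \<le> \<theta>"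
  shows "n < (p + 1) * \<theta> + \<tau>"
proof -
  have "(n - \<sigma>) * (1 + p) + (n - \<tau>) * (1 + q) > (n - \<alpha>) * (1 + p) * (1 + q)"
    using H assms by (simp add: field_simps)
  moreover have "(p + 1) * q0 \<alpha> p q \<sigma> \<tau> + \<tau> - n
      = ((n - \<sigma>) * (1 + p) + (n - \<tau>) * (1 + q) - (n - \<alpha>) * (1 + p) * (1 + q)) / (p * q - 1)"
    unfolding q0_def using assms by (simp add: field_simps)
  ultimately have "0 < (p + 1) * q0 \<alpha> p q \<sigma> \<tau> + \<tau> - n"
    using assms(1-3) by simp
  moreover have "(p + 1) * q0 \<alpha> p q \<sigma> \<tau> \<le> (p + 1) * \<theta>"
    using \<theta> assms by (simp add: mult_left_mono)
  ultimately show ?thesis by linarith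
qed

lemma mult_powr_bound_weaken:
  fixes y C C' t \<theta> \<theta>' :: real
  assumes "y \<le> C * t powr (-\<theta>)" "1 \<le> t" "\<theta>' \<le> \<theta>" "0 \<le> C" "C \<le> C'"
  shows "y \<le> C' * t powr (-\<theta>')"
proof -
  have "C * t powr (-\<theta>) \<le> C' * t powr (-\<theta>')"
    using assms by (intro mult_mono powr_mono) auto
  with assms(1) show ?thesis by linarith
qed

lemma decays_like_joint_upper_bound:
  fixes u v :: "'a::real_normed_vector \<Rightarrow> real"
  assumes u: "decays_like u \<theta>1" and v: "decays_like v \<theta>2" and "a \<le> \<theta>1" "b \<le> \<theta>2"
  shows "\<exists>C>0. \<exists>R. \<forall>x. norm x \<ge> R \<longrightarrow> u x \<le> C * norm x powr (-a) \<and> v x \<le> C * norm x powr (-b)"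
proof -
  obtain C1 R1 where C1: "C1 > 0" "\<And>x. R1 \<le> norm x \<Longrightarrow> u x \<le> C1 * norm x powr (-\<theta>1)"
    using u unfolding decays_like_def by blast
  obtain C2 R2 where C2: "C2 > 0" "\<And>x. R2 \<le> norm x \<Longrightarrow> v x \<le> C2 * norm x powr (-\<theta>2)"
    using v unfolding decays_like_def by blast
  have "u x \<le> max C1 C2 * norm x powr (-a)" "v x \<le> max C1 C2 * norm x powr (-b)"
    if x: "max (max R1 R2) 1 \<le> norm x" for x
  proof -
    have "u x \<le> C1 * norm x powr (-\<theta>1)" "v x \<le> C2 * norm x powr (-\<theta>2)"
      using x C1(2) C2(2) by simp_all
    with x C1(1) C2(1) assms(3,4) show "u x \<le> max C1 C2 * norm x powr (-a)" "v x \<le> max C1 C2 * norm x powr (-b)"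
      by (simp_all add: mult_powr_bound_weaken)
  qed
  moreover have "max C1 C2 > 0" using C1 by simp
  ultimately show ?thesis by blast
qed

lemma riesz_system_decay_exponents_ge:
  fixes u v :: "'a::euclidean_space \<Rightarrow> real" and \<alpha> p q \<sigma>1 \<sigma>2 \<theta>1 \<theta>2 :: real
  assumes u: "decays_like u \<theta>1" "\<theta>1 \<ge> 0" and v: "decays_like v \<theta>2" "\<theta>2 \<ge> 0"
    and pq: "p > 0" "q > 0" "p * q > 1" and \<sigma>: "0 \<le> \<sigma>1" "0 \<le> \<sigma>2" and \<alpha>: "\<alpha> < DIM('a)"
    and equ: "\<And>x. ennreal (u x) = (\<integral>\<^sup>+ y. ennreal (v y powr q / (norm (x - y) powr (DIM('a) - \<alpha>) * norm y powr \<sigma>1)) \<partial>lborel)"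
    and eqv: "\<And>x. ennreal (v x) = (\<integral>\<^sup>+ y. ennreal (u y powr p / (norm (x - y) powr (DIM('a) - \<alpha>) * norm y powr \<sigma>2)) \<partial>lborel)"
  shows "q0 \<alpha> p q \<sigma>1 \<sigma>2 \<le> \<theta>1" "p0 \<alpha> p q \<sigma>1 \<sigma>2 \<le> \<theta>2"
proof -
  have h1: "\<theta>1 \<le> q * \<theta>2 + \<sigma>1 - \<alpha>"
    by (rule decays_like_exponent_le_riesz_potential[OF u(1) v pq(2) \<sigma>(1) \<alpha> equ])
  have h2: "\<theta>2 \<le> p * \<theta>1 + \<sigma>2 - \<alpha>"
    by (rule decays_like_exponent_le_riesz_potential[OF v(1) u pq(1) \<sigma>(2) \<alpha> eqv])
  show "q0 \<alpha> p q \<sigma>1 \<sigma>2 \<le> \<theta>1"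
    using pq h1 h2 by (rule q0_le_of_decay_exponent_inequalities)
  show "p0 \<alpha> p q \<sigma>1 \<sigma>2 \<le> \<theta>2"
    unfolding p0_eq_q0_swap using pq h2 h1
    by (intro q0_le_of_decay_exponent_inequalities) (auto simp: mult.commute)
qed

theorem proposition2p1:
  fixes u v :: "real ^ 'n \<Rightarrow> real" and p q \<alpha> \<sigma>1 \<sigma>2 :: real
  defines "n \<equiv> real CARD('n)"
  assumes dim: "CARD('n) \<ge> 3"
    and pq: "p > 0" "q > 0" "p * q > 1"
    and alpha: "0 < \<alpha>" "\<alpha> < n"
    and sigma: "0 \<le> \<sigma>1" "\<sigma>1 < \<alpha>" "0 \<le> \<sigma>2" "\<sigma>2 < \<alpha>"
    and meas: "u \<in> borel_measurable lborel" "v \<in> borel_measurable lborel"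
    and pos: "\<And>x. u x > 0" "\<And>x. v x > 0"
    and bdd: "\<exists>M. \<forall>x. u x \<le> M" "\<exists>M. \<forall>x. v x \<le> M"
    and dec: "\<exists>\<theta>1>0. decays_like u \<theta>1" "\<exists>\<theta>2>0. decays_like v \<theta>2"
    and equ: "\<And>x. ennreal (u x) = (\<integral>\<^sup>+ y. ennreal (v y powr q /
                   (norm (x - y) powr (n - \<alpha>) * norm y powr \<sigma>1)) \<partial>lborel)"
    and eqv: "\<And>x. ennreal (v x) = (\<integral>\<^sup>+ y. ennreal (u y powr p /
                   (norm (x - y) powr (n - \<alpha>) * norm y powr \<sigma>2)) \<partial>lborel)"
  shows "(\<exists>C>0. \<exists>R. \<forall>x. norm x \<ge> R \<longrightarrow>
            u x \<le> C * norm x powr (- q0 \<alpha> p q \<sigma>1 \<sigma>2) \<and>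
            v x \<le> C * norm x powr (- p0 \<alpha> p q \<sigma>1 \<sigma>2))
       \<and> ((n - \<sigma>1) / (1 + q) + (n - \<sigma>2) / (1 + p) > n - \<alpha> \<longrightarrow>
            (\<integral>\<^sup>+ x. ennreal (u x powr (p + 1) / norm x powr \<sigma>2) \<partial>lborel) < \<infinity> \<and>
            (\<integral>\<^sup>+ x. ennreal (v x powr (q + 1) / norm x powr \<sigma>1) \<partial>lborel) < \<infinity>)"
proof -
  obtain \<theta>1 \<theta>2 where \<theta>1: "\<theta>1 > 0" "decays_like u \<theta>1" and \<theta>2: "\<theta>2 > 0" "decays_like v \<theta>2"
    using dec by blast
  have D: "real DIM(real ^ 'n) = n" unfolding n_def by simp
  have \<sigma>: "\<sigma>1 < DIM(real ^ 'n)" "\<sigma>2 < DIM(real ^ 'n)" using sigma alpha D by linarith+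
  have t1: "q0 \<alpha> p q \<sigma>1 \<sigma>2 \<le> \<theta>1" and t2: "p0 \<alpha> p q \<sigma>1 \<sigma>2 \<le> \<theta>2"
    using riesz_system_decay_exponents_ge[OF \<theta>1(2) _ \<theta>2(2) _ pq sigma(1,3) _ equ[folded D] eqv[folded D]]
      \<theta>1 \<theta>2 alpha D by simp_all
  obtain M1 M2 where M: "\<And>x. u x \<le> M1" "\<And>x. v x \<le> M2" using bdd by blast
  have integrable: "(\<integral>\<^sup>+ x. ennreal (u x powr (p + 1) / norm x powr \<sigma>2) \<partial>lborel) < \<infinity>"
       "(\<integral>\<^sup>+ x. ennreal (v x powr (q + 1) / norm x powr \<sigma>1) \<partial>lborel) < \<infinity>"
    if H: "(n - \<sigma>1) / (1 + q) + (n - \<sigma>2) / (1 + p) > n - \<alpha>"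
  proof -
    have "n < (p + 1) * \<theta>1 + \<sigma>2" "n < (q + 1) * \<theta>2 + \<sigma>1"
      using dim_less_integrability_exponent[OF pq H t1]
        dim_less_integrability_exponent[where p=q and q=p and \<sigma>=\<sigma>2 and \<tau>=\<sigma>1] pq H t2
      by (simp_all add: p0_eq_q0_swap mult.commute add.commute)
    thus "(\<integral>\<^sup>+ x. ennreal (u x powr (p + 1) / norm x powr \<sigma>2) \<partial>lborel) < \<infinity>"
         "(\<integral>\<^sup>+ x. ennreal (v x powr (q + 1) / norm x powr \<sigma>1) \<partial>lborel) < \<infinity>"
      using nn_integral_decaying_power_weight_finite[OF pos(1) M(1) \<theta>1(2) pq(1) sigma(3) \<sigma>(2)]
        nn_integral_decaying_power_weight_finite[OF pos(2) M(2) \<theta>2(2) pq(2) sigma(1) \<sigma>(1)]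
      by (simp_all add: n_def)
  qed
  show ?thesis
    using decays_like_joint_upper_bound[OF \<theta>1(2) \<theta>2(2) t1 t2] integrable by simp
qed

end
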